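(* For $n\ge1$ let $\psi_n(x)=\sum_{i\in\mathbb Z}\phi_n(x-i)^2$, $x\in\mathbb R$, where $\phi_n$ is the basic limit function of $S_n$. Then $\psi_n$ is positive, symmetric ($\psi_n(-x)=\psi_n(x)$), and periodic with period $1$. Moreover $\int_0^1\psi_n(x)\,dx$ is of order $1/n$, i.e. $\int_0^1\psi_n(x)\,dx\sim 1/n$, and there is a real constant $C$, independent of $n$, such that $\|\psi_n\|_\infty\le C/n$ for all $n\ge1$.
   Context: For an integer $n\ge1$, the subdivision scheme $S_n$ acts on real sequences $\mathbf f^k=(f^k_i)_{i\in\mathbb Z}$ (the value $f^k_i$ being associated with the dyadic point $2^{-k}i$) by the refinement rules $$f^{k+1}_{2i}=\frac1{2n-1}\sum_{j=-n+1}^{n-1}f^k_{i+j},\qquad f^{k+1}_{2i+1}=\frac1{2n}\sum_{j=-n+1}^{n}f^k_{i+j}.$$ This scheme is convergent (for bounded initial data the values $f^k_i$ converge uniformly to $F(2^{-k}i)$ for a continuous $F$). The basic limit function $\phi_n$ is the limit function generated from $\delta$ ($\delta_0=1$, $\delta_i=0$ otherwise); it is continuous and supported in $[-2n+1,2n-1]$, so the sum defining $\psi_n$ is finite. *)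

theory Defs
  imports "HOL-Analysis.Analysis"
begin

definition refine :: "nat \<Rightarrow> (int \<Rightarrow> real) \<Rightarrow> (int \<Rightarrow> real)" where
  "refine n f m =
     (let i = m div 2 in
      if even m
      then (1 / (2 * real n - 1)) * (\<Sum>j = - int n + 1 .. int n - 1. f (i + j))
      else (1 / (2 * real n)) * (\<Sum>j = - int n + 1 .. int n. f (i + j)))"

definition delta :: "int \<Rightarrow> real" where
  "delta i = (if i = 0 then 1 else 0)"

definition sub_delta :: "nat \<Rightarrow> nat \<Rightarrow> int \<Rightarrow> real" where
  "sub_delta n k = (refine n ^^ k) delta"

definition is_limit_function :: "(nat \<Rightarrow> int \<Rightarrow> real) \<Rightarrow> (real \<Rightarrow> real) \<Rightarrow> bool" where
  "is_limit_function f F \<longleftrightarrow> continuous_on UNIV F \<and>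
     (\<forall>e>0. \<forall>\<^sub>F k in sequentially. \<forall>i. \<bar>f k i - F (real_of_int i / 2 ^ k)\<bar> < e)"

definition phi :: "nat \<Rightarrow> real \<Rightarrow> real" where
  "phi n = (THE F. is_limit_function (sub_delta n) F)"

definition psi :: "nat \<Rightarrow> real \<Rightarrow> real" where
  "psi n x = (\<Sum>\<^sub>\<infinity> i::int. (phi n (x - real_of_int i))\<^sup>2)"

end

theory Submission
  imports Defs
begin

text \<open>Each value of f^(k+1) is the average of 2n - 1 or 2n consecutive values of f^k, and the
  windows averaged at neighbouring indices differ by a single point next to them. Hence refinement
  halves the largest difference of neighbouring values, so that |f^k_(i+1) - f^k_i| <= 2^-k, and it
  moves a value by at most n times that difference: the step functions x |-> f^k_(floor(2^k x))
  converge geometrically to a 1-Lipschitz function, which is phi_n. Averaging also preserves the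
  bound f^k <= 1/(2n - 1) (k >= 1), the symmetry of delta, a support of radius (2n - 1)(2^k - 1) and
  the partition of unity sum_i f^k_(m - 2^k i) = 1. In the limit phi_n <= 1/(2n - 1), phi_n is even,
  vanishes outside (-2n, 2n) and sum_i phi_n(x - i) = 1 with at most 4n nonzero terms. Therefore
  psi_n <= 1/(2n - 1) <= 1/n, while Cauchy-Schwarz gives psi_n >= (sum_i phi_n(x - i))^2 / (4n) = 1/(4n).\<close>

section \<open>Averages over integer windows\<close>

definition average :: "(int \<Rightarrow> real) \<Rightarrow> int set \<Rightarrow> real" where
  "average f A = (\<Sum>a\<in>A. f a) / real (card A)"

lemma average_bounds:
  assumes "finite A" "A \<noteq> {}" and "\<And>a. a \<in> A \<Longrightarrow> lo \<le> f a \<and> f a \<le> hi"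
  shows "lo \<le> average f A \<and> average f A \<le> hi"
proof -
  have "real (card A) > 0" using assms(1,2) by (simp add: card_gt_0_iff)
  moreover have "(\<Sum>a\<in>A. lo) \<le> (\<Sum>a\<in>A. f a)" "(\<Sum>a\<in>A. f a) \<le> (\<Sum>a\<in>A. hi)"
    by (rule sum_mono; use assms(3) in blast)+
  ultimately show ?thesis by (simp add: average_def field_simps)
qed

lemma average_image: "inj_on h A \<Longrightarrow> average f (h ` A) = average (f \<circ> h) A"
  by (simp add: average_def sum.reindex card_image)

lemma average_sum: "average (\<lambda>a. \<Sum>i\<in>S. g i a) A = (\<Sum>i\<in>S. average (g i) A)"
  by (simp add: average_def sum.swap[of _ S] sum_divide_distrib)

lemma dist_le_of_unit_steps:
  fixes f :: "int \<Rightarrow> real"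
  assumes steps: "\<And>j. \<bar>f (j + 1) - f j\<bar> \<le> d"
  shows "\<bar>f b - f a\<bar> \<le> real_of_int \<bar>b - a\<bar> * d"
proof -
  have ordered: "\<bar>f b - f a\<bar> \<le> real_of_int (b - a) * d" if "a \<le> b" for a b
    using that
  proof (induction b rule: int_ge_induct)
    case (step b)
    have "\<bar>f (b + 1) - f a\<bar> \<le> \<bar>f (b + 1) - f b\<bar> + \<bar>f b - f a\<bar>" by linarith
    also have "\<dots> \<le> d + real_of_int (b - a) * d" using steps step.IH by (rule add_mono)
    finally show ?case by (simp add: algebra_simps)
  qed simp
  show ?thesis
    using ordered[of a b] ordered[of b a] by (cases "a \<le> b") (auto simp: abs_minus_commute)
qed

lemma sum_distances_to_right_neighbour:
  fixes a b :: int
  assumes "a \<le> b + 1"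
  shows "(\<Sum>j\<in>{a..b}. real_of_int (b + 1 - j)) = real_of_int (b - a + 1) * real_of_int (b - a + 2) / 2"
proof -
  have "a - 1 \<le> b" using assms by simp
  then show ?thesis
  proof (induction b rule: int_ge_induct)
    case (step b)
    have "{a..b + 1} = insert (b + 1) {a..b}" using step.hyps by auto
    moreover have "(\<Sum>j\<in>{a..b}. real_of_int (b + 1 + 1 - j))
        = (\<Sum>j\<in>{a..b}. real_of_int (b + 1 - j)) + (\<Sum>j\<in>{a..b}. 1)"
      by (subst sum.distrib[symmetric]) (simp add: algebra_simps)
    moreover have "(\<Sum>j\<in>{a..b}. 1 :: real) = real_of_int (b - a + 1)"
      using step.hyps by simp
    ultimately show ?case using step.IH by (simp add: field_simps)
  qed simp
qed

lemma average_insert_right_neighbour: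
  fixes f :: "int \<Rightarrow> real"
  assumes steps: "\<And>j. \<bar>f (j + 1) - f j\<bar> \<le> d" and "a \<le> b"
  shows "\<bar>average f (insert (b + 1) {a..b}) - average f {a..b}\<bar> \<le> d / 2"
proof -
  define L where "L = real_of_int (b - a + 1)"
  have L: "L > 0" "real (card {a..b}) = L" "real (card (insert (b + 1) {a..b})) = L + 1"
    using \<open>a \<le> b\<close> by (auto simp: L_def)
  have diff: "average f (insert (b + 1) {a..b}) - average f {a..b}
      = (\<Sum>j\<in>{a..b}. f (b + 1) - f j) / (L * (L + 1))"
    using L by (simp add: average_def sum_subtractf field_simps)
  have "\<bar>\<Sum>j\<in>{a..b}. f (b + 1) - f j\<bar> \<le> (\<Sum>j\<in>{a..b}. real_of_int (b + 1 - j) * d)"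
  proof (rule order_trans[OF sum_abs sum_mono])
    fix j assume "j \<in> {a..b}"
    then show "\<bar>f (b + 1) - f j\<bar> \<le> real_of_int (b + 1 - j) * d"
      using dist_le_of_unit_steps[of f d, OF steps, of "b + 1" j] by simp
  qed
  also have "\<dots> = (\<Sum>j\<in>{a..b}. real_of_int (b + 1 - j)) * d"
    by (simp add: sum_distrib_right)
  also have "\<dots> = d * (L * (L + 1) / 2)"
    using \<open>a \<le> b\<close> by (subst sum_distances_to_right_neighbour) (simp_all add: L_def algebra_simps)
  finally show ?thesis using diff L by (simp add: abs_divide divide_le_eq)
qed

lemma average_insert_neighbour:
  fixes f :: "int \<Rightarrow> real"
  assumes steps: "\<And>j. \<bar>f (j + 1) - f j\<bar> \<le> d" and "a \<le> b" and "p = b + 1 \<or> p = a - 1"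
  shows "\<bar>average f (insert p {a..b}) - average f {a..b}\<bar> \<le> d / 2"
  using assms(3)
proof
  assume "p = a - 1"
  have steps': "\<bar>(f \<circ> uminus) (j + 1) - (f \<circ> uminus) j\<bar> \<le> d" for j
    using steps[of "- j - 1"] by (simp add: abs_minus_commute)
  have inj: "inj_on uminus A" for A :: "int set" by (simp add: inj_on_def)
  have "insert p {a..b} = uminus ` insert (- a + 1) {- b..- a}" using \<open>p = a - 1\<close> by auto
  moreover have "{a..b} = uminus ` {- b..- a}" by simp
  ultimately show ?thesis
    using average_insert_right_neighbour[of "f \<circ> uminus" d, OF steps', of "- b" "- a"] \<open>a \<le> b\<close>
    by (simp only: average_image[OF inj])
qed (use average_insert_right_neighbour[of f d, OF steps \<open>a \<le> b\<close>] in simp)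

section \<open>The refinement step\<close>

text \<open>The indices averaged by the rule for f^(k+1)_m: i - n + 1 .. i + n - 1 for m = 2i and
  i - n + 1 .. i + n for m = 2i + 1.\<close>
definition refine_window :: "nat \<Rightarrow> int \<Rightarrow> int set" where
  "refine_window n m = {m div 2 - int n + 1 .. (m + 1) div 2 + int n - 1}"

lemma finite_refine_window [simp]: "finite (refine_window n m)"
  by (simp add: refine_window_def)

lemma refine_window_nonempty: "n \<ge> 1 \<Longrightarrow> refine_window n m \<noteq> {}"
  by (simp add: refine_window_def)

lemma card_refine_window_ge: "n \<ge> 1 \<Longrightarrow> 2 * real n - 1 \<le> real (card (refine_window n m))"
  by (simp add: refine_window_def)

lemma refine_window_subset: "refine_window n m \<subseteq> {m div 2 - int n + 1 .. m div 2 + int n}"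
  by (auto simp: refine_window_def)

lemma refine_eq_average:
  assumes "n \<ge> 1"
  shows "refine n f m = average f (refine_window n m)"
proof -
  define i where "i = m div 2"
  define u where "u = (if even m then int n - 1 else int n)"
  have window: "refine_window n m = (+) i ` {- int n + 1 .. u}"
    by (auto simp: refine_window_def i_def u_def elim!: evenE oddE)
  have "average f (refine_window n m) = average (\<lambda>j. f (i + j)) {- int n + 1 .. u}"
    unfolding window by (subst average_image) (auto simp: comp_def)
  also have "\<dots> = refine n f m"
    using assms by (simp add: average_def refine_def i_def u_def Let_def of_nat_diff)
  finally show ?thesis ..
qed

lemma refine_window_uminus: "refine_window n (- m) = uminus ` refine_window n m"
proof -
  have "(- m) div 2 = - ((m + 1) div 2)" "(- m + 1) div 2 = - (m div 2)" by presburger+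
  then show ?thesis by (simp add: refine_window_def)
qed

lemma refine_window_translate: "refine_window n (m + 2 * s) = (+) s ` refine_window n m"
proof -
  have "(m + 2 * s) div 2 = m div 2 + s" "(m + 2 * s + 1) div 2 = (m + 1) div 2 + s" by presburger+
  then show ?thesis by (simp add: refine_window_def algebra_simps)
qed

lemma refine_step_contraction:
  assumes "n \<ge> 1" and steps: "\<And>j. \<bar>f (j + 1) - f j\<bar> \<le> d"
  shows "\<bar>refine n f (m + 1) - refine n f m\<bar> \<le> d / 2"
proof (cases "even m")
  case True
  then obtain i where m: "m = 2 * i" by (elim evenE)
  have "i - int n + 1 \<le> i + int n - 1" using assms(1) by simp
  moreover have "refine_window n m = {i - int n + 1 .. i + int n - 1}"
    "refine_window n (m + 1) = insert (i + int n - 1 + 1) {i - int n + 1 .. i + int n - 1}"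
    unfolding m refine_window_def using assms(1) by (auto simp: algebra_simps)
  ultimately show ?thesis
    using average_insert_neighbour[of f d, OF steps] assms(1) by (simp add: refine_eq_average)
next
  case False
  then obtain i where m: "m = 2 * i + 1" by (elim oddE)
  have "i - int n + 2 \<le> i + int n" using assms(1) by linarith
  moreover have "refine_window n (m + 1) = {i - int n + 2 .. i + int n}"
    "refine_window n m = insert (i - int n + 2 - 1) {i - int n + 2 .. i + int n}"
    unfolding m refine_window_def using assms(1) by (auto simp: algebra_simps)
  ultimately show ?thesis
    using average_insert_neighbour[of f d, OF steps] assms(1)
    by (simp add: refine_eq_average abs_minus_commute)
qed

lemma refine_near_parent:
  assumes "n \<ge> 1" and steps: "\<And>j. \<bar>f (j + 1) - f j\<bar> \<le> d" and "d \<ge> 0"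
  shows "\<bar>refine n f m - f (m div 2)\<bar> \<le> real n * d"
proof -
  have "f (m div 2) - real n * d \<le> f j \<and> f j \<le> f (m div 2) + real n * d"
    if "j \<in> refine_window n m" for j
  proof -
    have "\<bar>j - m div 2\<bar> \<le> int n" using refine_window_subset that by fastforce
    then have "real_of_int \<bar>j - m div 2\<bar> * d \<le> real n * d"
      using \<open>d \<ge> 0\<close> by (intro mult_right_mono) linarith+
    then show ?thesis using dist_le_of_unit_steps[of f d, OF steps, of j "m div 2"] by linarith
  qed
  then have "f (m div 2) - real n * d \<le> average f (refine_window n m) \<and>
      average f (refine_window n m) \<le> f (m div 2) + real n * d"
    using refine_window_nonempty[OF assms(1)] by (intro average_bounds) auto
  then show ?thesis using assms(1) by (simp add: refine_eq_average abs_le_iff)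
qed

lemma refine_bounds:
  assumes "n \<ge> 1" and "\<And>j. lo \<le> f j \<and> f j \<le> hi"
  shows "lo \<le> refine n f m \<and> refine n f m \<le> hi"
  using average_bounds[of "refine_window n m" lo f hi] assms refine_window_nonempty
  by (simp add: refine_eq_average)

lemma refine_uminus:
  assumes "n \<ge> 1" and "\<And>j. f (- j) = f j"
  shows "refine n f (- m) = refine n f m"
proof -
  have "f \<circ> uminus = f" using assms(2) by auto
  moreover have "inj_on uminus (refine_window n m)" by (simp add: inj_on_def)
  ultimately show ?thesis using assms(1) by (simp add: refine_eq_average refine_window_uminus average_image)
qed

lemma refine_vanishes:
  assumes "n \<ge> 1" and "\<And>j. j \<in> refine_window n m \<Longrightarrow> f j = 0"
  shows "refine n f m = 0"
  using assms by (simp add: refine_eq_average average_def)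

lemma sum_refine_translates:
  assumes "n \<ge> 1"
  shows "(\<Sum>i\<in>S. refine n f (m - 2 * P * i)) = average (\<lambda>j. \<Sum>i\<in>S. f (j - P * i)) (refine_window n m)"
proof -
  have "refine n f (m - 2 * P * i) = average (\<lambda>j. f (j - P * i)) (refine_window n m)" for i
  proof -
    have "refine_window n (m - 2 * P * i) = (+) (- P * i) ` refine_window n m"
      using refine_window_translate[of n m "- P * i"] by (simp add: mult.assoc)
    then show ?thesis using assms by (simp add: refine_eq_average average_image comp_def)
  qed
  then show ?thesis by (simp add: average_sum)
qed

lemma refine_delta_le:
  assumes "n \<ge> 1"
  shows "refine n delta m \<le> 1 / (2 * real n - 1)"
proof -
  have "(\<Sum>j\<in>refine_window n m. delta j) \<le> 1" by (simp add: delta_def)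
  moreover have "2 * real n - 1 > 0" using assms by simp
  ultimately show ?thesis
    using assms card_refine_window_ge[OF assms, of m]
    by (simp add: refine_eq_average average_def frac_le)
qed

section \<open>The iterates of delta\<close>

lemma sub_delta_0 [simp]: "sub_delta n 0 = delta"
  by (simp add: sub_delta_def)

lemma sub_delta_Suc [simp]: "sub_delta n (Suc k) = refine n (sub_delta n k)"
  by (simp add: sub_delta_def)

lemma sub_delta_steps:
  assumes "n \<ge> 1"
  shows "\<bar>sub_delta n k (i + 1) - sub_delta n k i\<bar> \<le> (1 / 2) ^ k"
proof (induction k arbitrary: i)
  case 0
  show ?case by (simp add: delta_def)
next
  case (Suc k)
  show ?case using refine_step_contraction[of n "sub_delta n k", OF assms Suc.IH] by simp
qed

lemma sub_delta_near_parent: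
  assumes "n \<ge> 1"
  shows "\<bar>sub_delta n (Suc k) m - sub_delta n k (m div 2)\<bar> \<le> real n * (1 / 2) ^ k"
  using refine_near_parent[of n "sub_delta n k" "(1 / 2) ^ k", OF assms sub_delta_steps[OF assms]] by simp

lemma refine_window_far:
  assumes "\<bar>m\<bar> > 2 * r + 2 * int n - 1" and "j \<in> refine_window n m"
  shows "\<bar>j\<bar> > r"
proof -
  have "m div 2 - int n + 1 \<le> j" "j \<le> (m + 1) div 2 + int n - 1"
    using assms(2) by (auto simp: refine_window_def)
  moreover have "m - 1 \<le> 2 * (m div 2)" "2 * ((m + 1) div 2) \<le> m + 1" by presburger+
  ultimately show ?thesis using assms(1) by linarith
qed

lemma sub_delta_support:
  assumes "n \<ge> 1" and "\<bar>i\<bar> > (2 * int n - 1) * (2 ^ k - 1)"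
  shows "sub_delta n k i = 0"
  using assms(2)
proof (induction k arbitrary: i)
  case 0
  then show ?case by (simp add: delta_def)
next
  case (Suc k)
  have "\<bar>i\<bar> > 2 * ((2 * int n - 1) * (2 ^ k - 1)) + 2 * int n - 1"
    using Suc.prems by (simp add: algebra_simps)
  then show ?case
    using refine_vanishes[OF assms(1)] Suc.IH refine_window_far by auto
qed

lemma sub_delta_bounds:
  assumes "n \<ge> 1"
  shows "0 \<le> sub_delta n k i \<and> sub_delta n k i \<le> 1"
proof (induction k arbitrary: i)
  case 0
  show ?case by (simp add: delta_def)
next
  case (Suc k)
  show ?case using refine_bounds[OF assms Suc.IH] by simp
qed

lemma sub_delta_le:
  assumes "n \<ge> 1" and "k \<ge> 1"
  shows "sub_delta n k i \<le> 1 / (2 * real n - 1)"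
proof -
  obtain k' where "k = Suc k'" using assms(2) by (cases k) auto
  moreover have "sub_delta n (Suc k') i \<le> 1 / (2 * real n - 1)" for i
  proof (induction k' arbitrary: i)
    case 0
    show ?case using refine_delta_le[OF assms(1)] by simp
  next
    case (Suc k')
    show ?case
      using refine_bounds[OF assms(1), of 0 "sub_delta n (Suc k')" "1 / (2 * real n - 1)"]
        Suc.IH sub_delta_bounds[OF assms(1), of "Suc k'"] by simp
  qed
  ultimately show ?thesis by simp
qed

lemma sub_delta_uminus:
  assumes "n \<ge> 1"
  shows "sub_delta n k (- i) = sub_delta n k i"
proof (induction k arbitrary: i)
  case 0
  show ?case by (simp add: delta_def)
next
  case (Suc k)
  show ?case using refine_uminus[of n "sub_delta n k", OF assms Suc.IH] by simp
qed

lemma sub_delta_partition_of_unity: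
  assumes "n \<ge> 1" and "finite S" and "\<And>i. i \<notin> S \<Longrightarrow> sub_delta n k (m - 2 ^ k * i) = 0"
  shows "(\<Sum>i\<in>S. sub_delta n k (m - 2 ^ k * i)) = 1"
  using assms(2,3)
proof (induction k arbitrary: m S)
  case 0
  then have "m \<in> S" by (force simp: delta_def)
  then show ?case using 0 by (simp add: delta_def)
next
  case (Suc k)
  define r where "r = (2 * int n - 1) * (2 ^ k - 1)"
  define M where "M = \<bar>m\<bar> + int n"
  \<comment> \<open>T enlarges S so that the induction hypothesis applies at every index of the window of m.\<close>
  define T where "T = S \<union> {- (M + r) .. M + r}"
  have "finite T" using Suc.prems by (simp add: T_def)
  have far: "\<bar>m' - 2 ^ k * i\<bar> > r" if "\<bar>m'\<bar> \<le> M" and "i \<notin> T" for m' i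
  proof -
    have "\<bar>i\<bar> \<le> \<bar>(2::int) ^ k * i\<bar>" by (simp add: abs_mult mult_le_cancel_right1)
    then show ?thesis using that by (auto simp: T_def)
  qed
  have unity: "(\<Sum>i\<in>T. sub_delta n k (j - 2 ^ k * i)) = 1" if "j \<in> refine_window n m" for j
  proof (rule Suc.IH[OF \<open>finite T\<close>])
    have "\<bar>m div 2\<bar> \<le> \<bar>m\<bar>" by presburger
    moreover have "m div 2 - int n + 1 \<le> j" "j \<le> m div 2 + int n"
      using that refine_window_subset[of n m] by auto
    ultimately have "\<bar>j\<bar> \<le> M" unfolding M_def by linarith
    then show "\<And>i. i \<notin> T \<Longrightarrow> sub_delta n k (j - 2 ^ k * i) = 0"
      using far sub_delta_support[OF assms(1)] unfolding r_def by blast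
  qed
  have "(\<Sum>i\<in>S. sub_delta n (Suc k) (m - 2 ^ Suc k * i)) = (\<Sum>i\<in>T. sub_delta n (Suc k) (m - 2 ^ Suc k * i))"
    using \<open>finite T\<close> Suc.prems(2) by (intro sum.mono_neutral_left) (auto simp: T_def)
  also have "\<dots> = average (\<lambda>j. \<Sum>i\<in>T. sub_delta n k (j - 2 ^ k * i)) (refine_window n m)"
    using sum_refine_translates[OF assms(1), where f = "sub_delta n k" and S = T and P = "2 ^ k"] by (simp add: mult.assoc)
  also have "\<dots> = 1"
    using unity refine_window_nonempty[OF assms(1)] by (simp add: average_def)
  finally show ?case .
qed

section \<open>Limit functions\<close>

lemma floor_scaled_bounds:
  fixes p x :: real
  assumes "p > 0"
  shows "x - 1 / p \<le> \<lfloor>p * x\<rfloor> / p \<and> \<lfloor>p * x\<rfloor> / p \<le> x"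
proof -
  have "p * x - 1 \<le> \<lfloor>p * x\<rfloor>" "\<lfloor>p * x\<rfloor> \<le> p * x" by linarith+
  then have "(p * x - 1) / p \<le> \<lfloor>p * x\<rfloor> / p" "\<lfloor>p * x\<rfloor> / p \<le> (p * x) / p"
    using assms by (simp_all only: divide_right_mono less_imp_le)
  moreover have "(p * x - 1) / p = x - 1 / p" "(p * x) / p = x" using assms by (simp_all add: diff_divide_distrib)
  ultimately show ?thesis by simp
qed

lemma is_limit_function_unique:
  assumes F: "is_limit_function f F" and G: "is_limit_function f G"
  shows "F = G"
proof
  fix x :: real
  define xs where "xs k = real_of_int \<lfloor>2 ^ k * x\<rfloor> / 2 ^ k" for k :: nat
  have lower: "(\<lambda>k. x - 1 / 2 ^ k) \<longlonglongrightarrow> x"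
    using tendsto_diff[OF tendsto_const[of x] LIMSEQ_divide_realpow_zero[of 2 1]] by simp
  have "x - 1 / 2 ^ k \<le> xs k" "xs k \<le> x" for k
    unfolding xs_def using floor_scaled_bounds[of "2 ^ k" x] by simp_all
  then have xs: "xs \<longlonglongrightarrow> x"
    by (intro real_tendsto_sandwich[OF _ _ lower tendsto_const] always_eventually allI)
  have "continuous_on UNIV F" "continuous_on UNIV G" using F G by (auto simp: is_limit_function_def)
  then have "(\<lambda>k. F (xs k)) \<longlonglongrightarrow> F x" "(\<lambda>k. G (xs k)) \<longlonglongrightarrow> G x"
    by (auto intro!: continuous_on_tendsto_compose[OF _ xs])
  then have lim: "(\<lambda>k. F (xs k) - G (xs k)) \<longlonglongrightarrow> F x - G x" by (rule tendsto_diff)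
  have "(\<lambda>k. F (xs k) - G (xs k)) \<longlonglongrightarrow> 0"
    unfolding tendsto_iff dist_real_def
  proof (intro allI impI)
    fix e :: real assume "e > 0"
    then have "e / 2 > 0" by simp
    then have "\<forall>\<^sub>F k in sequentially. \<forall>i. \<bar>f k i - F (real_of_int i / 2 ^ k)\<bar> < e / 2"
      "\<forall>\<^sub>F k in sequentially. \<forall>i. \<bar>f k i - G (real_of_int i / 2 ^ k)\<bar> < e / 2"
      using F G unfolding is_limit_function_def by blast+
    then show "\<forall>\<^sub>F k in sequentially. \<bar>F (xs k) - G (xs k) - 0\<bar> < e"
    proof eventually_elim
      case (elim k)
      then have "\<bar>f k \<lfloor>2 ^ k * x\<rfloor> - F (xs k)\<bar> < e / 2" "\<bar>f k \<lfloor>2 ^ k * x\<rfloor> - G (xs k)\<bar> < e / 2"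
        unfolding xs_def by blast+
      then show ?case by linarith
    qed
  qed
  with lim show "F x = G x" using LIMSEQ_unique by force
qed

lemma is_limit_function_reflect:
  assumes F: "is_limit_function f F" and even: "\<And>k i. f k (- i) = f k i"
  shows "is_limit_function f (\<lambda>x. F (- x))"
  unfolding is_limit_function_def
proof (intro conjI allI impI)
  have "continuous_on UNIV F" using F by (simp add: is_limit_function_def)
  then show "continuous_on UNIV (\<lambda>x. F (- x))"
    by (rule continuous_on_compose2[OF _ continuous_on_minus[OF continuous_on_id]]) simp
  fix e :: real assume "e > 0"
  then have "\<forall>\<^sub>F k in sequentially. \<forall>i. \<bar>f k i - F (real_of_int i / 2 ^ k)\<bar> < e"
    using F by (simp add: is_limit_function_def)
  then show "\<forall>\<^sub>F k in sequentially. \<forall>i. \<bar>f k i - F (- (real_of_int i / 2 ^ k))\<bar> < e"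
  proof eventually_elim
    case (elim k)
    show ?case
    proof
      fix i
      show "\<bar>f k i - F (- (real_of_int i / 2 ^ k))\<bar> < e"
        using elim[rule_format, of "- i"] even[of k i] by simp
    qed
  qed
qed

lemma geometric_increments_convergent:
  fixes s :: "nat \<Rightarrow> real"
  assumes increments: "\<And>k. \<bar>s (Suc k) - s k\<bar> \<le> c * (1 / 2) ^ k"
  shows "s \<longlonglongrightarrow> lim s" and "\<bar>s k - lim s\<bar> \<le> 2 * c * (1 / 2) ^ k"
proof -
  define u where "u k = s k + 2 * c * (1 / 2) ^ k" for k
  define v where "v k = s k - 2 * c * (1 / 2) ^ k" for k
  have "u (Suc k) \<le> u k \<and> v k \<le> v (Suc k)" for k
    using increments[of k] by (simp add: u_def v_def abs_le_iff)
  then have "decseq u" "incseq v" by (auto intro: decseq_SucI incseq_SucI)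
  have "c \<ge> 0" using increments[of 0] abs_ge_zero[of "s (Suc 0) - s 0"] by simp
  have "v 0 \<le> u k" for k
  proof -
    have "v 0 \<le> v k" using \<open>incseq v\<close> by (simp add: incseq_def)
    also have "\<dots> \<le> u k" using \<open>c \<ge> 0\<close> by (simp add: u_def v_def)
    finally show ?thesis .
  qed
  then obtain L where "u \<longlonglongrightarrow> L" using decseq_convergent[OF \<open>decseq u\<close>] by blast
  have vanish: "(\<lambda>k. 2 * c * (1 / 2) ^ k :: real) \<longlonglongrightarrow> 0"
    by (intro tendsto_mult_right_zero LIMSEQ_power_zero) simp
  have "(\<lambda>k. u k - 2 * c * (1 / 2) ^ k) \<longlonglongrightarrow> L"
    using tendsto_diff[OF \<open>u \<longlonglongrightarrow> L\<close> vanish] by simp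
  then have "s \<longlonglongrightarrow> L" by (simp add: u_def)
  then have "v \<longlonglongrightarrow> L" using tendsto_diff[OF _ vanish] unfolding v_def by fastforce
  have "L = lim s" using \<open>s \<longlonglongrightarrow> L\<close> by (simp add: limI)
  show "s \<longlonglongrightarrow> lim s" using \<open>s \<longlonglongrightarrow> L\<close> \<open>L = lim s\<close> by simp
  have "v k \<le> L" "L \<le> u k"
    using incseq_le[OF \<open>incseq v\<close> \<open>v \<longlonglongrightarrow> L\<close>] decseq_ge[OF \<open>decseq u\<close> \<open>u \<longlonglongrightarrow> L\<close>] by auto
  then show "\<bar>s k - lim s\<bar> \<le> 2 * c * (1 / 2) ^ k" using \<open>L = lim s\<close> by (simp add: u_def v_def abs_le_iff)
qed

section \<open>The basic limit function\<close>

definition sub_delta_interp :: "nat \<Rightarrow> nat \<Rightarrow> real \<Rightarrow> real" where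
  "sub_delta_interp n k x = sub_delta n k \<lfloor>2 ^ k * x\<rfloor>"

definition sub_delta_lim :: "nat \<Rightarrow> real \<Rightarrow> real" where
  "sub_delta_lim n x = lim (\<lambda>k. sub_delta_interp n k x)"

lemma floor_double_div_2: "\<lfloor>2 * y\<rfloor> div 2 = \<lfloor>y\<rfloor>" for y :: real
proof (rule floor_unique[symmetric])
  define q where "q = \<lfloor>2 * y\<rfloor> div 2"
  have "2 * q \<le> \<lfloor>2 * y\<rfloor>" "\<lfloor>2 * y\<rfloor> + 1 \<le> 2 * (q + 1)" unfolding q_def by presburger+
  then have "real_of_int (2 * q) \<le> 2 * y" "2 * y < real_of_int (2 * (q + 1))"
    by (meson floor_le_iff le_floor_iff not_less zle_add1_eq_le)+
  then show "real_of_int q \<le> y" "y < real_of_int q + 1" by simp_all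
qed

lemma le_abs_floor:
  fixes z :: real
  assumes "real_of_int c \<le> \<bar>z\<bar>"
  shows "c \<le> \<bar>\<lfloor>z\<rfloor>\<bar>"
proof (cases "z \<ge> 0")
  case True
  then have "c \<le> \<lfloor>z\<rfloor>" using assms by (simp add: le_floor_iff)
  then show ?thesis by linarith
next
  case False
  then have "\<bar>z\<bar> = - z" by simp
  then have "real_of_int \<lfloor>z\<rfloor> \<le> - real_of_int c" using assms of_int_floor_le[of z] by linarith
  then have "\<lfloor>z\<rfloor> \<le> - c" by (metis of_int_le_iff of_int_minus)
  then show ?thesis by linarith
qed

lemma sub_delta_interp_step:
  assumes "n \<ge> 1"
  shows "\<bar>sub_delta_interp n (Suc k) x - sub_delta_interp n k x\<bar> \<le> real n * (1 / 2) ^ k"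
proof -
  have "\<lfloor>2 ^ Suc k * x\<rfloor> div 2 = \<lfloor>2 ^ k * x\<rfloor>" using floor_double_div_2[of "2 ^ k * x"] by (simp add: mult.assoc)
  then show ?thesis
    using sub_delta_near_parent[OF assms, of k "\<lfloor>2 ^ Suc k * x\<rfloor>"] by (simp add: sub_delta_interp_def)
qed

lemma sub_delta_interp_tendsto:
  assumes "n \<ge> 1"
  shows "(\<lambda>k. sub_delta_interp n k x) \<longlonglongrightarrow> sub_delta_lim n x"
    and "\<bar>sub_delta_interp n k x - sub_delta_lim n x\<bar> \<le> 2 * real n * (1 / 2) ^ k"
  using geometric_increments_convergent[of "\<lambda>k. sub_delta_interp n k x", OF sub_delta_interp_step[OF assms]]
  unfolding sub_delta_lim_def by blast+

lemma sub_delta_interp_dist: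
  assumes "n \<ge> 1"
  shows "\<bar>sub_delta_interp n k x - sub_delta_interp n k y\<bar> \<le> \<bar>x - y\<bar> + (1 / 2) ^ k"
proof -
  have "\<bar>sub_delta_interp n k x - sub_delta_interp n k y\<bar>
      \<le> real_of_int \<bar>\<lfloor>2 ^ k * x\<rfloor> - \<lfloor>2 ^ k * y\<rfloor>\<bar> * (1 / 2) ^ k"
    unfolding sub_delta_interp_def by (rule dist_le_of_unit_steps) (rule sub_delta_steps[OF assms])
  also have "\<dots> \<le> (2 ^ k * \<bar>x - y\<bar> + 1) * (1 / 2) ^ k"
  proof (rule mult_right_mono)
    have "\<bar>2 ^ k * x - 2 ^ k * y\<bar> = 2 ^ k * \<bar>x - y\<bar>" by (simp add: abs_mult flip: right_diff_distrib)
    moreover have "2 ^ k * x - 1 < real_of_int \<lfloor>2 ^ k * x\<rfloor>" "real_of_int \<lfloor>2 ^ k * x\<rfloor> \<le> 2 ^ k * x"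
      "2 ^ k * y - 1 < real_of_int \<lfloor>2 ^ k * y\<rfloor>" "real_of_int \<lfloor>2 ^ k * y\<rfloor> \<le> 2 ^ k * y" by linarith+
    ultimately show "real_of_int \<bar>\<lfloor>2 ^ k * x\<rfloor> - \<lfloor>2 ^ k * y\<rfloor>\<bar> \<le> 2 ^ k * \<bar>x - y\<bar> + 1" by linarith
  qed simp
  also have "\<dots> = \<bar>x - y\<bar> + (1 / 2) ^ k"
  proof -
    have "(2::real) ^ k * (1 / 2) ^ k = 1" by (simp flip: power_mult_distrib)
    then show ?thesis by (simp add: algebra_simps)
  qed
  finally show ?thesis .
qed

lemma sub_delta_lim_lipschitz:
  assumes "n \<ge> 1"
  shows "1-lipschitz_on UNIV (sub_delta_lim n)"
proof (rule lipschitz_onI)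
  fix x y :: real
  have bound: "\<bar>sub_delta_lim n x - sub_delta_lim n y\<bar> \<le> \<bar>x - y\<bar> + (1 + 4 * real n) * (1 / 2) ^ k" for k
    using sub_delta_interp_dist[OF assms, of k x y] sub_delta_interp_tendsto(2)[OF assms, of k x]
      sub_delta_interp_tendsto(2)[OF assms, of k y]
    by (simp add: abs_le_iff algebra_simps)
  have "(\<lambda>k. \<bar>x - y\<bar> + (1 + 4 * real n) * (1 / 2) ^ k :: real) \<longlonglongrightarrow> \<bar>x - y\<bar> + 0"
    by (intro tendsto_add tendsto_const tendsto_mult_right_zero LIMSEQ_power_zero) simp
  then have "\<bar>sub_delta_lim n x - sub_delta_lim n y\<bar> \<le> \<bar>x - y\<bar>"
    using bound by (intro LIMSEQ_le_const) auto
  then show "dist (sub_delta_lim n x) (sub_delta_lim n y) \<le> 1 * dist x y" by (simp add: dist_real_def)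
qed simp

lemma is_limit_function_sub_delta_lim:
  assumes "n \<ge> 1"
  shows "is_limit_function (sub_delta n) (sub_delta_lim n)"
  unfolding is_limit_function_def
proof (intro conjI allI impI)
  show "continuous_on UNIV (sub_delta_lim n)"
    by (rule lipschitz_on_continuous_on[OF sub_delta_lim_lipschitz[OF assms]])
  fix e :: real assume "e > 0"
  have "(\<lambda>k. 2 * real n * (1 / 2) ^ k :: real) \<longlonglongrightarrow> 0"
    by (intro tendsto_mult_right_zero LIMSEQ_power_zero) simp
  from order_tendstoD(2)[OF this \<open>e > 0\<close>]
  show "\<forall>\<^sub>F k in sequentially. \<forall>i. \<bar>sub_delta n k i - sub_delta_lim n (real_of_int i / 2 ^ k)\<bar> < e"
  proof eventually_elim
    case (elim k)
    show ?case
    proof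
      fix i
      have "sub_delta_interp n k (real_of_int i / 2 ^ k) = sub_delta n k i"
        by (simp add: sub_delta_interp_def)
      then show "\<bar>sub_delta n k i - sub_delta_lim n (real_of_int i / 2 ^ k)\<bar> < e"
        using sub_delta_interp_tendsto(2)[OF assms, of k "real_of_int i / 2 ^ k"] elim by linarith
    qed
  qed
qed

lemma phi_eq_sub_delta_lim:
  assumes "n \<ge> 1"
  shows "phi n = sub_delta_lim n"
  unfolding phi_def
  using is_limit_function_sub_delta_lim[OF assms] is_limit_function_unique by blast

lemma is_limit_function_phi: "n \<ge> 1 \<Longrightarrow> is_limit_function (sub_delta n) (phi n)"
  using is_limit_function_sub_delta_lim phi_eq_sub_delta_lim by simp

lemma sub_delta_interp_tendsto_phi: "n \<ge> 1 \<Longrightarrow> (\<lambda>k. sub_delta_interp n k x) \<longlonglongrightarrow> phi n x"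
  using sub_delta_interp_tendsto(1) phi_eq_sub_delta_lim by simp

lemma phi_bounds:
  assumes "n \<ge> 1"
  shows "0 \<le> phi n x \<and> phi n x \<le> 1 / (2 * real n - 1)"
proof
  have "\<forall>k\<ge>0. 0 \<le> sub_delta_interp n k x"
    using sub_delta_bounds[OF assms] by (simp add: sub_delta_interp_def)
  then show "0 \<le> phi n x"
    by (intro LIMSEQ_le_const[OF sub_delta_interp_tendsto_phi[OF assms]]) blast
  have "\<forall>k\<ge>1. sub_delta_interp n k x \<le> 1 / (2 * real n - 1)"
    using sub_delta_le[OF assms] by (simp add: sub_delta_interp_def)
  then show "phi n x \<le> 1 / (2 * real n - 1)"
    by (intro LIMSEQ_le_const2[OF sub_delta_interp_tendsto_phi[OF assms]]) blast
qed

lemma sub_delta_interp_vanishes: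
  assumes "n \<ge> 1" and "2 * real n \<le> \<bar>y\<bar>"
  shows "sub_delta_interp n k y = 0"
proof -
  have "2 * real n * 2 ^ k \<le> \<bar>y\<bar> * 2 ^ k" using assms(2) by (rule mult_right_mono) simp
  then have "real_of_int (2 * int n * 2 ^ k) \<le> \<bar>2 ^ k * y\<bar>" by (simp add: abs_mult ac_simps)
  then have "2 * int n * 2 ^ k \<le> \<bar>\<lfloor>2 ^ k * y\<rfloor>\<bar>" by (rule le_abs_floor)
  moreover have "(2 * int n - 1) * (2 ^ k - 1) = 2 * int n * 2 ^ k - 2 * int n - 2 ^ k + 1"
    by (simp add: algebra_simps)
  moreover have "(1::int) \<le> 2 ^ k" by simp
  ultimately have "\<bar>\<lfloor>2 ^ k * y\<rfloor>\<bar> > (2 * int n - 1) * (2 ^ k - 1)" using assms(1) by linarith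
  then show ?thesis unfolding sub_delta_interp_def by (rule sub_delta_support[OF assms(1)])
qed

lemma phi_vanishes:
  assumes "n \<ge> 1" and "2 * real n \<le> \<bar>y\<bar>"
  shows "phi n y = 0"
  using sub_delta_interp_tendsto_phi[OF assms(1), of y] sub_delta_interp_vanishes[OF assms]
  by (simp add: LIMSEQ_const_iff)

lemma phi_uminus:
  assumes "n \<ge> 1"
  shows "phi n (- x) = phi n x"
proof -
  have "is_limit_function (sub_delta n) (\<lambda>x. phi n (- x))"
    using is_limit_function_reflect[OF is_limit_function_phi[OF assms]] sub_delta_uminus[OF assms] by blast
  from is_limit_function_unique[OF this is_limit_function_phi[OF assms]] show ?thesis by metis
qed

lemma sub_delta_interp_translate:
  "sub_delta_interp n k (x - real_of_int i) = sub_delta n k (\<lfloor>2 ^ k * x\<rfloor> - 2 ^ k * i)"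
proof -
  have "2 ^ k * (x - real_of_int i) = 2 ^ k * x - real_of_int (2 ^ k * i)" by (simp add: algebra_simps)
  then show ?thesis unfolding sub_delta_interp_def by (simp only: floor_diff_of_int)
qed

lemma phi_partition_of_unity:
  assumes "n \<ge> 1" and "finite S" and covers: "\<And>i. \<bar>x - real_of_int i\<bar> < 2 * real n \<Longrightarrow> i \<in> S"
  shows "(\<Sum>i\<in>S. phi n (x - real_of_int i)) = 1"
proof -
  have "(\<Sum>i\<in>S. sub_delta_interp n k (x - real_of_int i)) = 1" for k
    unfolding sub_delta_interp_translate
  proof (rule sub_delta_partition_of_unity[OF assms(1,2)])
    fix i assume "i \<notin> S"
    then have "sub_delta_interp n k (x - real_of_int i) = 0"
      using covers sub_delta_interp_vanishes[OF assms(1)] by (meson not_less)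
    then show "sub_delta n k (\<lfloor>2 ^ k * x\<rfloor> - 2 ^ k * i) = 0" by (simp only: sub_delta_interp_translate)
  qed
  moreover have "(\<lambda>k. \<Sum>i\<in>S. sub_delta_interp n k (x - real_of_int i)) \<longlonglongrightarrow> (\<Sum>i\<in>S. phi n (x - real_of_int i))"
    by (intro tendsto_sum sub_delta_interp_tendsto_phi[OF assms(1)])
  ultimately show ?thesis by (simp add: LIMSEQ_const_iff)
qed

section \<open>The function psi\<close>

lemma near_integers_in_window:
  assumes "\<bar>x - real_of_int i\<bar> < 2 * real n"
  shows "i \<in> {\<lfloor>x\<rfloor> - 2 * int n + 1 .. \<lfloor>x\<rfloor> + 2 * int n}"
proof -
  have "x - 2 * real n < real_of_int i" "real_of_int i < x + 2 * real n"
    using assms by (auto simp: abs_less_iff)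
  moreover have "real_of_int \<lfloor>x\<rfloor> \<le> x" "x < real_of_int \<lfloor>x\<rfloor> + 1" by linarith+
  moreover have "real_of_int (\<lfloor>x\<rfloor> - 2 * int n) = real_of_int \<lfloor>x\<rfloor> - 2 * real n"
    "real_of_int (\<lfloor>x\<rfloor> + 2 * int n + 1) = real_of_int \<lfloor>x\<rfloor> + 2 * real n + 1" by simp_all
  ultimately have "real_of_int (\<lfloor>x\<rfloor> - 2 * int n) < real_of_int i"
    "real_of_int i < real_of_int (\<lfloor>x\<rfloor> + 2 * int n + 1)" by linarith+
  then show ?thesis unfolding of_int_less_iff by simp
qed

lemma psi_eq_sum:
  assumes "n \<ge> 1" and "finite S" and covers: "\<And>i. \<bar>x - real_of_int i\<bar> < 2 * real n \<Longrightarrow> i \<in> S"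
  shows "psi n x = (\<Sum>i\<in>S. (phi n (x - real_of_int i))\<^sup>2)"
proof -
  have "psi n x = infsum (\<lambda>i. (phi n (x - real_of_int i))\<^sup>2) S"
    unfolding psi_def
  proof (rule infsum_cong_neutral)
    fix i assume "i \<in> UNIV - S"
    then have "2 * real n \<le> \<bar>x - real_of_int i\<bar>" using covers by force
    then show "(phi n (x - real_of_int i))\<^sup>2 = 0" by (simp add: phi_vanishes[OF assms(1)])
  qed auto
  then show ?thesis using assms(2) by simp
qed

lemma psi_le:
  assumes "n \<ge> 1"
  shows "psi n x \<le> 1 / real n"
proof -
  define S where "S = {\<lfloor>x\<rfloor> - 2 * int n + 1 .. \<lfloor>x\<rfloor> + 2 * int n}"
  have S: "finite S" "\<And>i. \<bar>x - real_of_int i\<bar> < 2 * real n \<Longrightarrow> i \<in> S"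
    using near_integers_in_window by (auto simp: S_def)
  have "psi n x = (\<Sum>i\<in>S. phi n (x - real_of_int i) * phi n (x - real_of_int i))"
    using psi_eq_sum[OF assms S] by (simp add: power2_eq_square)
  also have "\<dots> \<le> (\<Sum>i\<in>S. phi n (x - real_of_int i) * (1 / (2 * real n - 1)))"
    by (intro sum_mono mult_left_mono) (use phi_bounds[OF assms] in auto)
  also have "\<dots> = 1 / (2 * real n - 1)"
    by (simp add: phi_partition_of_unity[OF assms S] flip: sum_divide_distrib)
  also have "\<dots> \<le> 1 / real n" using assms by (intro divide_left_mono) auto
  finally show ?thesis .
qed

lemma psi_ge:
  assumes "n \<ge> 1"
  shows "1 / (4 * real n) \<le> psi n x"
proof -
  define S where "S = {\<lfloor>x\<rfloor> - 2 * int n + 1 .. \<lfloor>x\<rfloor> + 2 * int n}"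
  have S: "finite S" "\<And>i. \<bar>x - real_of_int i\<bar> < 2 * real n \<Longrightarrow> i \<in> S"
    using near_integers_in_window by (auto simp: S_def)
  have "card S = 4 * n" by (simp add: S_def)
  moreover have "(\<Sum>i\<in>S. phi n (x - real_of_int i))\<^sup>2 \<le> (\<Sum>i\<in>S. (phi n (x - real_of_int i))\<^sup>2) * card S"
    by (rule sum_squared_le_sum_of_squares)
  ultimately have "1 \<le> psi n x * (4 * real n)"
    by (simp add: phi_partition_of_unity[OF assms S] psi_eq_sum[OF assms S])
  then show ?thesis using assms by (simp add: divide_le_eq mult.commute)
qed

lemma psi_periodic: "psi n (x + 1) = psi n x"
proof -
  have "bij_betw (\<lambda>i. i + 1) (UNIV :: int set) UNIV"
    by (rule bij_betwI[where g = "\<lambda>i. i - 1"]) auto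
  from infsum_reindex_bij_betw[OF this, of "\<lambda>i. (phi n (x + 1 - real_of_int i))\<^sup>2"]
  show ?thesis by (simp add: psi_def)
qed

lemma psi_uminus:
  assumes "n \<ge> 1"
  shows "psi n (- x) = psi n x"
proof -
  have "bij_betw uminus (UNIV :: int set) UNIV"
    by (rule bij_betwI[where g = uminus]) auto
  moreover have "phi n (real_of_int i - x) = phi n (x - real_of_int i)" for i
    using phi_uminus[OF assms, of "x - real_of_int i"] by simp
  ultimately show ?thesis
    using infsum_reindex_bij_betw[of uminus UNIV UNIV "\<lambda>i. (phi n (- x - real_of_int i))\<^sup>2"]
    by (simp add: psi_def)
qed

lemma psi_integrable:
  assumes "n \<ge> 1"
  shows "psi n integrable_on {0..1}"
proof -
  define S where "S = {- 2 * int n + 1 .. 2 * int n + 1}"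
  have psi_on_unit: "psi n x = (\<Sum>i\<in>S. (phi n (x - real_of_int i))\<^sup>2)" if "x \<in> {0..1}" for x
  proof (rule psi_eq_sum[OF assms])
    have "0 \<le> \<lfloor>x\<rfloor>" "\<lfloor>x\<rfloor> \<le> 1" using that floor_mono[of x 1] by auto
    then show "\<And>i. \<bar>x - real_of_int i\<bar> < 2 * real n \<Longrightarrow> i \<in> S"
      using near_integers_in_window unfolding S_def by fastforce
  qed (simp add: S_def)
  have "continuous_on UNIV (phi n)" using is_limit_function_phi[OF assms] by (simp add: is_limit_function_def)
  then have "continuous_on {0..1} (\<lambda>x. phi n (x - real_of_int i))" for i
    by (rule continuous_on_compose2[OF _ continuous_on_diff[OF continuous_on_id continuous_on_const]]) simp
  then have "continuous_on {0..1} (\<lambda>x. \<Sum>i\<in>S. (phi n (x - real_of_int i))\<^sup>2)"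
    by (intro continuous_on_sum continuous_on_power)
  then have "continuous_on {0..1} (psi n)" by (rule continuous_on_eq) (simp add: psi_on_unit)
  then show ?thesis by (rule integrable_continuous_interval)
qed

lemma integral_psi_bounds:
  assumes "n \<ge> 1"
  shows "1 / (4 * real n) \<le> integral {0..1} (psi n) \<and> integral {0..1} (psi n) \<le> 1 / real n"
proof
  show "1 / (4 * real n) \<le> integral {0..1} (psi n)"
    using integral_le[OF integrable_const_ivl psi_integrable[OF assms] psi_ge[OF assms]]
    by simp
  show "integral {0..1} (psi n) \<le> 1 / real n"
    using integral_le[OF psi_integrable[OF assms] integrable_const_ivl psi_le[OF assms]]
    by simp
qed

theorem theorem6:
  shows "(\<forall>n\<ge>1. \<forall>x::real. psi n x > 0 \<and> psi n (- x) = psi n x \<and> psi n (x + 1) = psi n x)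
    \<and> (\<exists>c1 c2::real. 0 < c1 \<and> 0 < c2 \<and>
         (\<forall>n::nat\<ge>1. c1 / real n \<le> integral {0..1} (psi n) \<and> integral {0..1} (psi n) \<le> c2 / real n))
    \<and> (\<exists>C::real. \<forall>n::nat\<ge>1. \<forall>x. \<bar>psi n x\<bar> \<le> C / real n)"
proof (intro conjI)
  show "\<forall>n\<ge>1. \<forall>x::real. psi n x > 0 \<and> psi n (- x) = psi n x \<and> psi n (x + 1) = psi n x"
  proof (intro allI impI conjI)
    fix n :: nat and x :: real assume n: "n \<ge> 1"
    have "0 < 1 / (4 * real n)" using n by simp
    then show "psi n x > 0" using psi_ge[OF n, of x] by linarith
    show "psi n (- x) = psi n x" by (rule psi_uminus[OF n])
    show "psi n (x + 1) = psi n x" by (rule psi_periodic)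
  qed
  show "\<exists>c1 c2::real. 0 < c1 \<and> 0 < c2 \<and>
      (\<forall>n::nat\<ge>1. c1 / real n \<le> integral {0..1} (psi n) \<and> integral {0..1} (psi n) \<le> c2 / real n)"
    using integral_psi_bounds by (intro exI[of _ "1 / 4"] exI[of _ 1]) simp
  show "\<exists>C::real. \<forall>n::nat\<ge>1. \<forall>x. \<bar>psi n x\<bar> \<le> C / real n"
  proof (intro exI[of _ 1] allI impI)
    fix n :: nat and x :: real assume n: "n \<ge> 1"
    have "0 \<le> 1 / (4 * real n)" by simp
    then show "\<bar>psi n x\<bar> \<le> 1 / real n" using psi_ge[OF n, of x] psi_le[OF n, of x] by linarith
  qed
qed

end
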